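(* Let $X_1$ and $X_2$ be finite sets of quantifier-free first-order clauses, and let $\pi(X_1)$ be the set of prime implicates of $X_1$. If $C_1$ and $C_2$ are implicates of $\pi(X_1)\cup X_2$ and their consensus $CON(C_1,C_2)$ is defined, then $CON(C_1,C_2)$ is an implicate of $X_1\cup X_2$.
   Context: The setting is first-order logic without equality. A literal is an atom or a negated atom. A clause is a finite disjunction of literals, also viewed as a finite set of literals, and all its variables are implicitly universally quantified. A formula (knowledge base) is a finite conjunction, equivalently a finite set, of clauses. A clause is fundamental if it does not contain a literal together with its negation; all clauses considered are assumed fundamental. $\models$ denotes first-order logical consequence. Clause $C_1$ subsumes clause $C_2$ iff there is a substitution $\sigma$ with $C_1\sigma\subseteq C_2$. A clause $C$ is an implicate of a set of clauses $X$ if $X\sigma\models C$ for some substitution $\sigma$. A prime implicate of $X$ is an implicate of $X$ that is not subsumed by any other implicate of $X$. $\pi(X)$ denotes the set of prime implicates of $X$. Two literals $r,s$ are complementary if $\{r,\neg s\}$ is unifiable; its most general unifier $\sigma$ is the complementary substitution. For clauses $C_1\ni r$ and $C_2\ni s$ with $r,s$ complementary via mgu $\sigma$ (so $r\sigma=t$ and $s\sigma=\neg t$), the resolvent is $[(C_1-\{r\})\cup(C_2-\{s\})]\sigma=(C_1\sigma-\{t\})\cup(C_2\sigma-\{\neg t\})$. If this resolvent is fundamental it is called the consensus $CON(C_1,C_2)$, and it is said to be associated with $\sigma$. Each original clause of a set is associated with the empty substitution. If $C_1,C_2$ are associated with $\sigma_1,\sigma_2$, their consensus with respect to $\sigma$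 is defined only when $\sigma_1\sigma=\sigma_2\sigma$. In that case it is the propositional consensus of $C_1\sigma$ and $C_2\sigma$, and it is associated with $\sigma_1\sigma=\sigma_2\sigma$. *)

theory Defs
  imports Main
begin

datatype ('f, 'v) trm = Var 'v | Fn 'f "('f, 'v) trm list"

datatype ('p, 'f, 'v) lit = Pos 'p "('f, 'v) trm list" | Neg 'p "('f, 'v) trm list"

type_synonym ('p, 'f, 'v) clause = "('p, 'f, 'v) lit set"

type_synonym ('f, 'v) subst = "'v \<Rightarrow> ('f, 'v) trm"

fun trm_subst :: "('f, 'v) subst \<Rightarrow> ('f, 'v) trm \<Rightarrow> ('f, 'v) trm" where
  "trm_subst \<sigma> (Var x) = \<sigma> x"
| "trm_subst \<sigma> (Fn f ts) = Fn f (map (trm_subst \<sigma>) ts)"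

fun lit_subst :: "('f, 'v) subst \<Rightarrow> ('p, 'f, 'v) lit \<Rightarrow> ('p, 'f, 'v) lit" where
  "lit_subst \<sigma> (Pos p ts) = Pos p (map (trm_subst \<sigma>) ts)"
| "lit_subst \<sigma> (Neg p ts) = Neg p (map (trm_subst \<sigma>) ts)"

definition clause_subst :: "('f, 'v) subst \<Rightarrow> ('p, 'f, 'v) clause \<Rightarrow> ('p, 'f, 'v) clause" where
  "clause_subst \<sigma> C = lit_subst \<sigma> ` C"

definition clauses_subst :: "('f, 'v) subst \<Rightarrow> ('p, 'f, 'v) clause set \<Rightarrow> ('p, 'f, 'v) clause set" where
  "clauses_subst \<sigma> X = clause_subst \<sigma> ` X"

text \<open>Composition: apply \<sigma> first, then \<tau> (written \<sigma>\<tau> in the paper).\<close>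
definition subst_comp :: "('f, 'v) subst \<Rightarrow> ('f, 'v) subst \<Rightarrow> ('f, 'v) subst" where
  "subst_comp \<sigma> \<tau> = (\<lambda>x. trm_subst \<tau> (\<sigma> x))"

fun negate :: "('p, 'f, 'v) lit \<Rightarrow> ('p, 'f, 'v) lit" where
  "negate (Pos p ts) = Neg p ts"
| "negate (Neg p ts) = Pos p ts"

definition fundamental :: "('p, 'f, 'v) clause \<Rightarrow> bool" where
  "fundamental C \<longleftrightarrow> (\<forall>l\<in>C. negate l \<notin> C)"

definition is_clause :: "('p, 'f, 'v) clause \<Rightarrow> bool" where
  "is_clause C \<longleftrightarrow> finite C \<and> fundamental C"

definition lit_unifier :: "('f, 'v) subst \<Rightarrow> ('p, 'f, 'v) lit \<Rightarrow> ('p, 'f, 'v) lit \<Rightarrow> bool" where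
  "lit_unifier \<sigma> l1 l2 \<longleftrightarrow> lit_subst \<sigma> l1 = lit_subst \<sigma> l2"

definition lit_mgu :: "('f, 'v) subst \<Rightarrow> ('p, 'f, 'v) lit \<Rightarrow> ('p, 'f, 'v) lit \<Rightarrow> bool" where
  "lit_mgu \<sigma> l1 l2 \<longleftrightarrow> lit_unifier \<sigma> l1 l2 \<and>
     (\<forall>\<tau>. lit_unifier \<tau> l1 l2 \<longrightarrow> (\<exists>\<rho>. \<tau> = subst_comp \<sigma> \<rho>))"

definition complementary_via :: "('f, 'v) subst \<Rightarrow> ('p, 'f, 'v) lit \<Rightarrow> ('p, 'f, 'v) lit \<Rightarrow> bool" where
  "complementary_via \<sigma> r s \<longleftrightarrow> lit_mgu \<sigma> r (negate s)"

text \<open>Resolvent [(C1 - {r}) \<union> (C2 - {s})]\<sigma> = (C1\<sigma> - {t}) \<union> (C2\<sigma> - {\<not>t}), t = r\<sigma>.\<close>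
definition resolvent ::
  "('f, 'v) subst \<Rightarrow> ('p, 'f, 'v) clause \<Rightarrow> ('p, 'f, 'v) lit \<Rightarrow> ('p, 'f, 'v) clause \<Rightarrow> ('p, 'f, 'v) lit
   \<Rightarrow> ('p, 'f, 'v) clause" where
  "resolvent \<sigma> C1 r C2 s =
     (clause_subst \<sigma> C1 - {lit_subst \<sigma> r}) \<union> (clause_subst \<sigma> C2 - {negate (lit_subst \<sigma> r)})"

text \<open>Domains are nonempty subsets of a type whose cardinality is at least that of the
  language plus aleph0; by downward Loewenheim-Skolem (without equality) this captures
  first-order consequence exactly.\<close>
type_synonym ('p, 'f, 'v) univ = "'f + 'p + 'v + nat"

definition wf_interp :: "'u set \<Rightarrow> ('f \<Rightarrow> 'u list \<Rightarrow> 'u) \<Rightarrow> bool" where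
  "wf_interp D F \<longleftrightarrow> D \<noteq> {} \<and> (\<forall>f us. set us \<subseteq> D \<longrightarrow> F f us \<in> D)"

fun eval_trm :: "('f \<Rightarrow> 'u list \<Rightarrow> 'u) \<Rightarrow> ('v \<Rightarrow> 'u) \<Rightarrow> ('f, 'v) trm \<Rightarrow> 'u" where
  "eval_trm F e (Var x) = e x"
| "eval_trm F e (Fn f ts) = F f (map (eval_trm F e) ts)"

fun eval_lit :: "('f \<Rightarrow> 'u list \<Rightarrow> 'u) \<Rightarrow> ('p \<Rightarrow> 'u list \<Rightarrow> bool) \<Rightarrow> ('v \<Rightarrow> 'u)
                  \<Rightarrow> ('p, 'f, 'v) lit \<Rightarrow> bool" where
  "eval_lit F R e (Pos p ts) = R p (map (eval_trm F e) ts)"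
| "eval_lit F R e (Neg p ts) = (\<not> R p (map (eval_trm F e) ts))"

definition sat_clause :: "'u set \<Rightarrow> ('f \<Rightarrow> 'u list \<Rightarrow> 'u) \<Rightarrow> ('p \<Rightarrow> 'u list \<Rightarrow> bool)
                          \<Rightarrow> ('p, 'f, 'v) clause \<Rightarrow> bool" where
  "sat_clause D F R C \<longleftrightarrow> (\<forall>e. range e \<subseteq> D \<longrightarrow> (\<exists>l\<in>C. eval_lit F R e l))"

definition entails :: "('p, 'f, 'v) clause set \<Rightarrow> ('p, 'f, 'v) clause \<Rightarrow> bool" where
  "entails X C \<longleftrightarrow>
     (\<forall>(D :: ('p, 'f, 'v) univ set) F R. wf_interp D F \<longrightarrow>
        (\<forall>c\<in>X. sat_clause D F R c) \<longrightarrow> sat_clause D F R C)"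

definition subsumes :: "('p, 'f, 'v) clause \<Rightarrow> ('p, 'f, 'v) clause \<Rightarrow> bool" where
  "subsumes C1 C2 \<longleftrightarrow> (\<exists>\<sigma>. clause_subst \<sigma> C1 \<subseteq> C2)"

definition implicate_via :: "('p, 'f, 'v) clause set \<Rightarrow> ('f, 'v) subst \<Rightarrow> ('p, 'f, 'v) clause \<Rightarrow> bool" where
  "implicate_via X \<sigma> C \<longleftrightarrow> is_clause C \<and> entails (clauses_subst \<sigma> X) C"

definition implicate :: "('p, 'f, 'v) clause set \<Rightarrow> ('p, 'f, 'v) clause \<Rightarrow> bool" where
  "implicate X C \<longleftrightarrow> (\<exists>\<sigma>. implicate_via X \<sigma> C)"

text \<open>Prime: not strictly subsumed by another implicate (variants count as the same clause).\<close>
definition prime_implicate :: "('p, 'f, 'v) clause set \<Rightarrow> ('p, 'f, 'v) clause \<Rightarrow> bool" where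
  "prime_implicate X C \<longleftrightarrow> implicate X C \<and>
     (\<forall>D. implicate X D \<and> subsumes D C \<longrightarrow> subsumes C D)"

definition prime_implicates :: "('p, 'f, 'v) clause set \<Rightarrow> ('p, 'f, 'v) clause set" ("\<pi>") where
  "\<pi> X = {C. prime_implicate X C}"

end

theory Submission
  imports Defs
begin

text \<open>Every prime implicate of \<open>X\<^sub>1\<close> is entailed by \<open>X\<^sub>1\<close>, and instances of entailed
  clauses are entailed, so \<open>X\<^sub>1 \<union> X\<^sub>2\<close> entails every instance of \<open>\<pi>(X\<^sub>1) \<union> X\<^sub>2\<close>, hence
  \<open>C\<^sub>1\<close> and \<open>C\<^sub>2\<close>. Resolution is sound for any substitution, so \<open>X\<^sub>1 \<union> X\<^sub>2\<close> entails
  \<open>CON(C\<^sub>1, C\<^sub>2)\<close> itself: it is an implicate witnessed by the empty substitution, and the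
  unification hypotheses only serve to make the consensus defined.\<close>

lemma trm_subst_Var [simp]: "trm_subst Var t = t"
  by (induction t) (simp_all add: map_idI)

lemma lit_subst_Var [simp]: "lit_subst Var l = l"
  by (cases l) (simp_all add: map_idI)

lemma clauses_subst_Var [simp]: "clauses_subst Var X = X"
  by (simp add: clauses_subst_def clause_subst_def)

lemma eval_trm_in_domain:
  assumes "wf_interp D F" "range e \<subseteq> D"
  shows "eval_trm F e t \<in> D"
proof (induction t)
  case (Fn f ts)
  then have "set (map (eval_trm F e) ts) \<subseteq> D" by auto
  then show ?case using assms(1) unfolding wf_interp_def by simp
qed (use assms(2) in auto)

lemma eval_trm_subst:
  "eval_trm F e (trm_subst \<tau> t) = eval_trm F (\<lambda>x. eval_trm F e (\<tau> x)) t"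
  by (induction t) (auto cong: map_cong)

lemma eval_lit_subst:
  "eval_lit F R e (lit_subst \<tau> l) = eval_lit F R (\<lambda>x. eval_trm F e (\<tau> x)) l"
  by (cases l) (auto simp: eval_trm_subst comp_def)

lemma eval_lit_negate [simp]: "eval_lit F R e (negate l) = (\<not> eval_lit F R e l)"
  by (cases l) auto

lemma sat_clause_subst:
  fixes C :: "('p, 'f, 'v) clause" and D :: "'u set"
  assumes "wf_interp D F" "sat_clause D F R C"
  shows "sat_clause D F R (clause_subst \<tau> C)"
  unfolding sat_clause_def
proof (intro allI impI)
  fix e :: "'v \<Rightarrow> 'u" assume "range e \<subseteq> D"
  then have "range (\<lambda>x. eval_trm F e (\<tau> x)) \<subseteq> D"
    using eval_trm_in_domain[OF assms(1)] by auto
  then obtain l where "l \<in> C" "eval_lit F R (\<lambda>x. eval_trm F e (\<tau> x)) l"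
    using assms(2) unfolding sat_clause_def by blast
  then show "\<exists>l\<in>clause_subst \<tau> C. eval_lit F R e l"
    unfolding clause_subst_def by (auto simp: eval_lit_subst)
qed

lemma sat_clause_resolvent:
  fixes C1 C2 :: "('p, 'f, 'v) clause" and D :: "'u set"
  assumes "sat_clause D F R C1" "sat_clause D F R C2"
  shows "sat_clause D F R ((C1 - {t}) \<union> (C2 - {negate t}))"
  unfolding sat_clause_def
proof (intro allI impI)
  fix e :: "'v \<Rightarrow> 'u" assume e: "range e \<subseteq> D"
  obtain l1 where "l1 \<in> C1" "eval_lit F R e l1"
    using assms(1) e unfolding sat_clause_def by blast
  moreover obtain l2 where "l2 \<in> C2" "eval_lit F R e l2"
    using assms(2) e unfolding sat_clause_def by blast
  ultimately show "\<exists>l\<in>(C1 - {t}) \<union> (C2 - {negate t}). eval_lit F R e l"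
  proof (cases "eval_lit F R e t")
    case True
    then have "l2 \<noteq> negate t" using \<open>eval_lit F R e l2\<close> by auto
    then show ?thesis using \<open>l2 \<in> C2\<close> \<open>eval_lit F R e l2\<close> by blast
  next
    case False
    then have "l1 \<noteq> t" using \<open>eval_lit F R e l1\<close> by auto
    then show ?thesis using \<open>l1 \<in> C1\<close> \<open>eval_lit F R e l1\<close> by blast
  qed
qed

lemma entails_clauses_subst:
  "entails (clauses_subst \<tau> X) C \<Longrightarrow> entails X C"
  unfolding entails_def clauses_subst_def by (blast intro: sat_clause_subst)

lemma entails_trans:
  assumes "\<forall>c\<in>Y. entails X c" "entails Y C"
  shows "entails X C"
  using assms unfolding entails_def by blast

lemma entails_mono:
  "entails X C \<Longrightarrow> X \<subseteq> Y \<Longrightarrow> entails Y C"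
  unfolding entails_def by blast

lemma entails_member: "C \<in> X \<Longrightarrow> entails X C"
  unfolding entails_def by blast

lemma entails_implicate_via: "implicate_via X \<tau> C \<Longrightarrow> entails X C"
  unfolding implicate_via_def by (blast intro: entails_clauses_subst)

lemma entails_prime_implicate: "C \<in> \<pi> X \<Longrightarrow> entails X C"
  unfolding prime_implicates_def prime_implicate_def implicate_def
  by (blast intro: entails_implicate_via)

lemma entails_resolvent:
  assumes "entails X C1" "entails X C2"
  shows "entails X (resolvent \<sigma> C1 r C2 s)"
  using assms unfolding entails_def resolvent_def
  by (blast intro: sat_clause_subst sat_clause_resolvent)

lemma finite_resolvent:
  "finite C1 \<Longrightarrow> finite C2 \<Longrightarrow> finite (resolvent \<sigma> C1 r C2 s)"
  unfolding resolvent_def clause_subst_def by simp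

lemma implicate_entailed:
  "is_clause C \<Longrightarrow> entails X C \<Longrightarrow> implicate X C"
  unfolding implicate_def implicate_via_def
  by (metis clauses_subst_Var)

theorem theorem1:
  fixes X1 X2 :: "('p, 'f, 'v) clause set"
    and C1 C2 :: "('p, 'f, 'v) clause"
    and r s :: "('p, 'f, 'v) lit"
    and \<sigma>1 \<sigma>2 \<sigma> :: "('f, 'v) subst"
  assumes "finite X1" and "finite X2"
    and "\<forall>C\<in>X1 \<union> X2. is_clause C"
    and "implicate_via (\<pi> X1 \<union> X2) \<sigma>1 C1"
    and "implicate_via (\<pi> X1 \<union> X2) \<sigma>2 C2"
    and "r \<in> C1" and "s \<in> C2"
    and "complementary_via \<sigma> r s"
    and "subst_comp \<sigma>1 \<sigma> = subst_comp \<sigma>2 \<sigma>"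
    and "fundamental (resolvent \<sigma> C1 r C2 s)"
  shows "implicate (X1 \<union> X2) (resolvent \<sigma> C1 r C2 s)"
proof -
  have "\<forall>c\<in>\<pi> X1 \<union> X2. entails (X1 \<union> X2) c"
    by (blast intro: entails_mono[OF entails_prime_implicate] entails_member)
  then have "entails (X1 \<union> X2) C1" and "entails (X1 \<union> X2) C2"
    using assms(4,5) by (blast intro: entails_trans entails_implicate_via)+
  then have "entails (X1 \<union> X2) (resolvent \<sigma> C1 r C2 s)"
    by (rule entails_resolvent)
  moreover have "finite (resolvent \<sigma> C1 r C2 s)"
    using assms(4,5) by (simp add: implicate_via_def is_clause_def finite_resolvent)
  ultimately show ?thesis
    using assms(10) by (simp add: implicate_entailed is_clause_def)
qed

end
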